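(* Let $(X_n)_{n\ge0}$ be a homogeneous Markov chain on $\mathbb{R}^d$ satisfying assumptions $(\mathcal{A}_1)$ and $(\mathcal{A}_2)$ below, started from $X_0\sim\mu$. Then for any $n\ge1$ and any sufficiently small $\epsilon>0$, $$\mathbb{P}_\mu\big(d_H(\mathbb{X}_n,\mathbb{M})>\epsilon\big)\le\frac{4^b(1-\kappa\epsilon^bV_d/2^b)^n}{\kappa\epsilon^bV_d}.$$ Consequently the chain is asymptotically $(\epsilon,\alpha)$-dense in $\mathbb{M}$, with threshold $$n_0=\frac{2^b}{\kappa\epsilon^bV_d}\Big(\ln\frac{4^b}{\kappa\epsilon^bV_d}+\ln\frac1\alpha\Big),$$ i.e. for sufficiently small $\epsilon>0$, any $\alpha\in(0,1)$ and all $n\ge n_0$, $\mathbb{P}_\mu(d_H(\mathbb{X}_n,\mathbb{M})\le\epsilon)\ge1-\alpha$.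
   Context: $(\mathcal{A}_1)$: the chain has an invariant probability measure $\mu$ with compact support $\mathbb{M}$. $(\mathcal{A}_2)$: the transition kernel $K(x,\cdot)=\mathbb{P}(X_1\in\cdot\mid X_0=x)$, $x\in\mathbb{M}$, satisfies $K(x,dy)=k(x,y)\nu(dy)$ for a positive measure $\nu$ on $\mathbb{M}$ and a positive function $k$; for some $b>0$ and $\epsilon_0>0$, $V_d:=\inf_{x\in\mathbb{M}}\inf_{0<\epsilon<\epsilon_0}\epsilon^{-b}\nu(B(x,\epsilon)\cap\mathbb{M})>0$; and there is $\kappa>0$ with $\inf_{x,y\in\mathbb{M}}k(x,y)\ge\kappa$. $B(x,\epsilon)$ is the closed Euclidean ball; $\mathbb{P}_\mu$ denotes probability when $X_0\sim\mu$. $\mathbb{X}_n=\{X_1,\ldots,X_n\}$ and $d_H$ is the Hausdorff distance $d_H(A,B)=\max(\sup_{x\in A}\inf_{y\in B}\|x-y\|,\sup_{x\in B}\inf_{y\in A}\|x-y\|)$. *)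

theory Defs
  imports "HOL-Analysis.Analysis" "HOL-Probability.Probability"
begin

definition hausdorff_dist :: "'a::metric_space set \<Rightarrow> 'a set \<Rightarrow> real" where
  "hausdorff_dist A B =
     max (SUP x\<in>A. INF y\<in>B. dist x y) (SUP x\<in>B. INF y\<in>A. dist x y)"

definition measure_support :: "'a::metric_space measure \<Rightarrow> 'a set" where
  "measure_support m = {x. \<forall>e>0. emeasure m (ball x e) > 0}"

definition gen_events :: "'w measure \<Rightarrow> (nat \<Rightarrow> 'w \<Rightarrow> 'a::topological_space) \<Rightarrow> nat \<Rightarrow> 'w set set" where
  "gen_events P X n =
     sigma_sets (space P) {X i -` B \<inter> space P | i B. i \<le> n \<and> B \<in> sets borel}"

end

theory Submission
  imports Defs
begin

text \<open>Let \<open>S\<close> be a maximal \<open>\<epsilon>/2\<close>-separated subset of \<open>\<MM>\<close>. The balls of radius \<open>\<epsilon>/4\<close>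
  around its points are disjoint and each carries \<open>\<nu>\<close>-mass at least \<open>V (\<epsilon>/4)\<^sup>b\<close>, while
  \<open>\<kappa> \<nu>(\<MM>) \<le> 1\<close>; hence \<open>|S| \<le> 4\<^sup>b / (\<kappa> \<epsilon>\<^sup>b V)\<close>, and by maximality \<open>S\<close> is an \<open>\<epsilon>/2\<close>-net
  of \<open>\<MM>\<close>. Since the chain stays in \<open>\<MM>\<close> almost surely, \<open>d\<^sub>H(\<XX>\<^sub>n, \<MM>) > \<epsilon>\<close> forces
  some ball \<open>B(s, \<epsilon>/2)\<close>, \<open>s \<in> S\<close>, to be missed by \<open>X\<^sub>1, \<dots>, X\<^sub>n\<close>. The minorization
  \<open>K(x, B) \<ge> \<kappa> \<nu>(B \<inter> \<MM>) \<ge> \<kappa> V (\<epsilon>/2)\<^sup>b\<close> and the Markov property bound each such miss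
  by \<open>(1 - \<kappa> \<epsilon>\<^sup>b V / 2\<^sup>b)\<^sup>n\<close>; a union bound over \<open>S\<close> gives the estimate, and
  \<open>1 - q \<le> e\<^sup>-\<^sup>q\<close> turns it into the threshold \<open>n\<^sub>0\<close>.\<close>

lemma hausdorff_dist_le_iff:
  fixes A M :: "'a::heine_borel set"
  assumes "finite A" "A \<noteq> {}" "bounded M" "M \<noteq> {}"
  shows "hausdorff_dist A M \<le> e \<longleftrightarrow>
     (\<forall>a\<in>A. infdist a M \<le> e) \<and> (\<forall>x\<in>M. \<exists>a\<in>A. dist x a \<le> e)"
proof -
  have eq: "hausdorff_dist A M = max (SUP a\<in>A. infdist a M) (SUP x\<in>M. infdist x A)"
    unfolding hausdorff_dist_def infdist_def using assms by simp
  have bdd_A: "bdd_above ((\<lambda>a. infdist a M) ` A)"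
    using assms(1) by simp
  obtain a0 where a0: "a0 \<in> A"
    using assms by auto
  obtain c R where R: "\<And>x. x \<in> M \<Longrightarrow> dist c x \<le> R"
    using assms(3) unfolding bounded_def by auto
  have bdd_M: "bdd_above ((\<lambda>x. infdist x A) ` M)"
  proof (rule bdd_aboveI2)
    fix x assume "x \<in> M"
    have "infdist x A \<le> dist x a0"
      using a0 by (rule infdist_le)
    also have "\<dots> \<le> R + dist c a0"
      using dist_triangle3[of x a0 c] R[OF \<open>x \<in> M\<close>] by linarith
    finally show "infdist x A \<le> R + dist c a0" .
  qed
  have infdist_A: "infdist x A \<le> e \<longleftrightarrow> (\<exists>a\<in>A. dist x a \<le> e)" for x
  proof -
    obtain a where "a \<in> A" "infdist x A = dist x a"
      using infdist_attains_inf[of A x] assms(1,2) finite_imp_closed by blast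
    then show ?thesis
      using infdist_le2 by fastforce
  qed
  show ?thesis
    unfolding eq max.bounded_iff
    using cSUP_le_iff[OF _ bdd_A, of e] cSUP_le_iff[OF _ bdd_M, of e] assms infdist_A by auto
qed

lemma covered_iff_dense_covered:
  fixes A M D :: "'a::metric_space set"
  assumes "finite A" "D \<subseteq> M" "M \<subseteq> closure D"
  shows "(\<forall>x\<in>M. \<exists>a\<in>A. dist x a \<le> e) \<longleftrightarrow> (\<forall>x\<in>D. \<exists>a\<in>A. dist x a \<le> e)"
proof
  assume "\<forall>x\<in>D. \<exists>a\<in>A. dist x a \<le> e"
  then have "D \<subseteq> (\<Union>a\<in>A. cball a e)"
    by (auto simp: dist_commute)
  moreover have "closed (\<Union>a\<in>A. cball a e)"
    using assms(1) by (intro closed_UN) auto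
  ultimately have "closure D \<subseteq> (\<Union>a\<in>A. cball a e)"
    by (rule closure_minimal)
  then show "\<forall>x\<in>M. \<exists>a\<in>A. dist x a \<le> e"
    using assms(3) by (fastforce simp: dist_commute)
qed (use assms in auto)

lemma measurable_hausdorff_dist_le:
  fixes X :: "nat \<Rightarrow> 'w \<Rightarrow> 'a::euclidean_space"
  assumes [measurable]: "\<And>i. X i \<in> borel_measurable P"
    and M: "compact M" "M \<noteq> {}" and "n \<ge> 1"
  shows "{\<omega>\<in>space P. hausdorff_dist ((\<lambda>i. X i \<omega>) ` {1..n}) M \<le> e} \<in> sets P"
proof -
  obtain D where D: "countable D" "D \<subseteq> M" "M \<subseteq> closure D"
    using separable by blast
  have "hausdorff_dist ((\<lambda>i. X i \<omega>) ` {1..n}) M \<le> e \<longleftrightarrow>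
      (\<forall>i\<in>{1..n}. infdist (X i \<omega>) M \<le> e) \<and> (\<forall>x\<in>D. \<exists>i\<in>{1..n}. dist x (X i \<omega>) \<le> e)" for \<omega>
    using hausdorff_dist_le_iff[of "(\<lambda>i. X i \<omega>) ` {1..n}" M e]
      covered_iff_dense_covered[OF _ D(2,3), of "(\<lambda>i. X i \<omega>) ` {1..n}" e]
      \<open>n \<ge> 1\<close> M by (auto simp: compact_imp_bounded)
  moreover have [measurable]: "(\<lambda>x. infdist x M) \<in> borel_measurable borel"
    by (intro borel_measurable_continuous_onI continuous_intros)
  moreover have "Measurable.pred P (\<lambda>\<omega>. \<forall>x\<in>D. \<exists>i\<in>{1..n}. dist x (X i \<omega>) \<le> e)"
    by (intro measurable_pred_countable[OF D(1)]) measurable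
  ultimately show ?thesis
    by simp measurable
qed

lemma hausdorff_dist_gt_imp_avoids_ball:
  fixes A M S :: "'a::heine_borel set"
  assumes "finite A" "A \<noteq> {}" "A \<subseteq> M" "bounded M"
    and cover: "\<And>x. x \<in> M \<Longrightarrow> \<exists>s\<in>S. dist x s \<le> r"
    and "2 * r < hausdorff_dist A M"
  shows "\<exists>s\<in>S. \<forall>a\<in>A. a \<notin> cball s r"
proof -
  obtain a0 where "a0 \<in> M"
    using assms(2,3) by blast
  then obtain s0 where "dist a0 s0 \<le> r"
    using cover by blast
  then have "0 \<le> r"
    using zero_le_dist order_trans by blast
  then have "\<forall>a\<in>A. infdist a M \<le> 2 * r"
    using assms(3) by (auto simp: infdist_zero)
  then obtain x where x: "x \<in> M" "\<forall>a\<in>A. 2 * r < dist x a"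
    using assms(6) hausdorff_dist_le_iff[OF assms(1,2,4), of "2 * r"] \<open>a0 \<in> M\<close>
    by (auto simp: not_le)
  obtain s where s: "s \<in> S" "dist x s \<le> r"
    using cover[OF x(1)] by blast
  have "r < dist s a" if "a \<in> A" for a
    using x(2) that s(2) dist_triangle[of x a s] by force
  then show ?thesis
    using s(1) by force
qed

lemma sigma_algebra_gen_events: "sigma_algebra (space P) (gen_events P X n)"
  unfolding gen_events_def by (rule sigma_algebra_sigma_sets) auto

lemma vimage_in_gen_events:
  "i \<le> n \<Longrightarrow> B \<in> sets borel \<Longrightarrow> X i -` B \<inter> space P \<in> gen_events P X n"
  unfolding gen_events_def by (rule sigma_sets.Basic) blast

lemma avoiding_event_in_gen_events:
  assumes "C \<in> sets borel"
  shows "{\<omega>\<in>space P. \<forall>i\<in>{1..n}. X i \<omega> \<notin> C} \<in> gen_events P X n"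
proof -
  interpret sigma_algebra "space P" "gen_events P X n"
    by (rule sigma_algebra_gen_events)
  have "{\<omega>\<in>space P. \<forall>i\<in>{1..n}. X i \<omega> \<notin> C} = space P - (\<Union>i\<in>{1..n}. X i -` C \<inter> space P)"
    by auto
  also have "\<dots> \<in> gen_events P X n"
    using assms by (intro Diff top finite_UN) (auto intro: vimage_in_gen_events)
  finally show ?thesis .
qed

lemma INF_INF_le_nonneg:
  fixes f :: "'a \<Rightarrow> 'b \<Rightarrow> real"
  assumes "\<And>x y. 0 \<le> f x y" "x \<in> A" "y \<in> B"
  shows "(INF x\<in>A. INF y\<in>B. f x y) \<le> f x y"
proof -
  have "(INF x\<in>A. INF y\<in>B. f x y) \<le> (INF y\<in>B. f x y)"
    using assms by (intro cINF_lower bdd_belowI2[where m=0] cINF_greatest) auto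
  also have "\<dots> \<le> f x y"
    using assms by (intro cINF_lower bdd_belowI2[where m=0]) auto
  finally show ?thesis .
qed

lemma card_separated_mult_le_measure:
  fixes \<nu> :: "'a::metric_space measure"
  assumes "finite_measure \<nu>" "sets \<nu> = sets borel" "M \<in> sets borel"
    and S: "finite S" "S \<subseteq> M" "\<And>s t. s \<in> S \<Longrightarrow> t \<in> S \<Longrightarrow> s \<noteq> t \<Longrightarrow> r < dist s t"
    and m: "\<And>x. x \<in> M \<Longrightarrow> m \<le> measure \<nu> (cball x (r/2) \<inter> M)"
  shows "real (card S) * m \<le> measure \<nu> M"
proof -
  interpret finite_measure \<nu>
    by (rule assms(1))
  define B where "B s = cball s (r/2) \<inter> M" for s
  have "disjoint_family_on B S"
    unfolding disjoint_family_on_def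
  proof (intro ballI impI)
    fix s t assume st: "s \<in> S" "t \<in> S" "s \<noteq> t"
    show "B s \<inter> B t = {}"
    proof (rule ccontr)
      assume "B s \<inter> B t \<noteq> {}"
      then obtain y where "dist s y \<le> r/2" "dist t y \<le> r/2"
        unfolding B_def by auto
      then show False
        using S(3)[OF st] dist_triangle[of s t y] dist_commute[of y t] by linarith
    qed
  qed
  have "m \<le> measure \<nu> (B s)" if "s \<in> S" for s
    using m S(2) that unfolding B_def by blast
  then have "real (card S) * m \<le> (\<Sum>s\<in>S. measure \<nu> (B s))"
    using sum_mono[of S "\<lambda>_. m"] by simp
  also have "\<dots> = measure \<nu> (\<Union>s\<in>S. B s)"
  proof (rule measure_finite_Union[symmetric])
    show "B ` S \<subseteq> sets \<nu>"
      unfolding B_def assms(2) using assms(3) by auto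
    show "emeasure \<nu> (B s) \<noteq> \<infinity>" for s
      using emeasure_finite[of "B s"] by simp
  qed (fact S(1) \<open>disjoint_family_on B S\<close>)+
  also have "\<dots> \<le> measure \<nu> M"
  proof (rule finite_measure_mono)
    show "M \<in> sets \<nu>"
      using assms(2,3) by simp
  qed (auto simp: B_def)
  finally show ?thesis .
qed

lemma exists_finite_cover_of_measure_lower_bound:
  fixes \<nu> :: "'a::metric_space measure"
  assumes "finite_measure \<nu>" "sets \<nu> = sets borel" "M \<in> sets borel" "0 < m" "0 \<le> r"
    and m: "\<And>x. x \<in> M \<Longrightarrow> m \<le> measure \<nu> (cball x (r/2) \<inter> M)"
  obtains S where "finite S" "S \<subseteq> M" "real (card S) * m \<le> measure \<nu> M"
    "\<And>x. x \<in> M \<Longrightarrow> \<exists>s\<in>S. dist x s \<le> r"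
proof -
  define Sep where "Sep S \<longleftrightarrow> finite S \<and> S \<subseteq> M \<and> (\<forall>s\<in>S. \<forall>t\<in>S. s \<noteq> t \<longrightarrow> r < dist s t)" for S
  have card_le: "real (card S) * m \<le> measure \<nu> M" if "Sep S" for S
    using that assms unfolding Sep_def by (intro card_separated_mult_le_measure) auto
  have "card ` Collect Sep \<subseteq> {..nat \<lceil>measure \<nu> M / m\<rceil>}"
  proof (rule image_subsetI)
    fix S assume "S \<in> Collect Sep"
    then have "real (card S) \<le> measure \<nu> M / m"
      using card_le \<open>0 < m\<close> by (simp add: pos_le_divide_eq)
    then show "card S \<in> {..nat \<lceil>measure \<nu> M / m\<rceil>}"
      by (simp add: le_nat_iff) linarith
  qed
  then have fin: "finite (card ` Collect Sep)"
    by (rule finite_subset) simp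
  have "Sep {}"
    unfolding Sep_def by simp
  then obtain S where S: "Sep S" "card S = Max (card ` Collect Sep)"
    using Max_in[OF fin] by force
  have covers: "\<exists>s\<in>S. dist x s \<le> r" if "x \<in> M" for x
  proof (rule ccontr)
    assume "\<not> ?thesis"
    then have "Sep (insert x S)" "x \<notin> S"
      using S(1) that \<open>0 \<le> r\<close> unfolding Sep_def by (auto simp: dist_commute)
    have "card (insert x S) \<le> card S"
      unfolding S(2) using fin \<open>Sep (insert x S)\<close> by (intro Max_ge) auto
    then show False
      using \<open>x \<notin> S\<close> S(1) unfolding Sep_def by simp
  qed
  show ?thesis
    using S(1) unfolding Sep_def by (intro that[OF _ _ card_le[OF S(1)] covers]) auto
qed

lemma mult_one_minus_power_le:
  fixes q N \<alpha> :: real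
  assumes "0 < q" "q \<le> 1" "0 < N" "0 < \<alpha>" "1 / q * (ln N + ln (1 / \<alpha>)) \<le> real n"
  shows "N * (1 - q) ^ n \<le> \<alpha>"
proof -
  have "ln N + ln (1 / \<alpha>) \<le> q * real n"
    using assms(1,5) by (simp add: field_simps)
  have "(1 - q) ^ n \<le> exp (- q) ^ n"
    using assms(2) exp_minus_ge[of q] by (intro power_mono) auto
  also have "\<dots> = exp (- (q * real n))"
    by (simp add: exp_of_nat_mult[symmetric] mult.commute)
  also have "\<dots> \<le> exp (- (ln N + ln (1 / \<alpha>)))"
    using \<open>ln N + ln (1 / \<alpha>) \<le> q * real n\<close> by simp
  also have "- (ln N + ln (1 / \<alpha>)) = ln (\<alpha> / N)"
    using assms(3,4) by (simp add: ln_div)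
  also have "exp (ln (\<alpha> / N)) = \<alpha> / N"
    using assms(3,4) by simp
  finally show ?thesis
    using assms(3) by (simp add: field_simps)
qed

locale minorized_markov_chain = prob_space P
  for P :: "'w measure" and X :: "nat \<Rightarrow> 'w \<Rightarrow> 'a::euclidean_space"
    and \<mu> \<nu> :: "'a measure" and k :: "'a \<Rightarrow> 'a \<Rightarrow> real" and \<kappa> :: real and M :: "'a set" +
  assumes X_measurable[measurable]: "\<And>i. X i \<in> borel_measurable P"
    and prob_space_mu: "prob_space \<mu>" and sets_mu: "sets \<mu> = sets borel"
    and compact_M: "compact M"
    and invariant: "\<And>A. A \<in> sets borel \<Longrightarrow>
          emeasure \<mu> A = (\<integral>\<^sup>+ x. emeasure (density \<nu> (k x)) A \<partial>\<mu>)"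
    and sets_nu: "sets \<nu> = sets borel"
    and nu_compl_M: "emeasure \<nu> (- M) = 0"
    and k_measurable[measurable]: "\<And>x. k x \<in> borel_measurable borel"
    and prob_space_kernel: "\<And>x. x \<in> M \<Longrightarrow> prob_space (density \<nu> (k x))"
    and kappa_pos: "\<kappa> > 0"
    and kappa_le_k: "\<And>x y. x \<in> M \<Longrightarrow> y \<in> M \<Longrightarrow> \<kappa> \<le> k x y"
    and init: "distr P borel (X 0) = \<mu>"
    and markov: "\<And>n A G. A \<in> sets borel \<Longrightarrow> G \<in> gen_events P X n \<Longrightarrow>
          emeasure P (G \<inter> {\<omega> \<in> space P. X (Suc n) \<omega> \<in> A})
            = (\<integral>\<^sup>+ \<omega>. indicator G \<omega> * emeasure (density \<nu> (k (X n \<omega>))) A \<partial>P)"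
begin

declare sets_nu [measurable_cong]

abbreviation K :: "'a \<Rightarrow> 'a measure" where
  "K x \<equiv> density \<nu> (k x)"

lemma sets_K [simp]: "sets (K x) = sets borel"
  by (simp add: sets_nu)

lemma space_nu [simp]: "space \<nu> = UNIV"
  using sets_eq_imp_space_eq[OF sets_nu] by simp

lemma space_K [simp]: "space (K x) = UNIV"
  using sets_eq_imp_space_eq[OF sets_K[of x]] by simp

lemma M_borel [measurable]: "M \<in> sets borel"
  using compact_M by (simp add: compact_imp_closed)

lemma emeasure_K: "A \<in> sets borel \<Longrightarrow> emeasure (K x) A = (\<integral>\<^sup>+ y. ennreal (k x y) * indicator A y \<partial>\<nu>)"
  by (intro emeasure_density) (auto simp: sets_nu)

lemma AE_nu_M: "AE y in \<nu>. y \<in> M"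
  using nu_compl_M sets_nu by (intro AE_I'[of "- M"]) (auto simp: null_sets_def)

lemma emeasure_K_compl_M: "emeasure (K x) (- M) = 0"
proof -
  have "emeasure (K x) (- M) = (\<integral>\<^sup>+ y. ennreal (k x y) * indicator (- M) y \<partial>\<nu>)"
    by (rule emeasure_K) auto
  also have "\<dots> = 0"
    using AE_nu_M by (subst nn_integral_0_iff_AE) (auto elim!: eventually_mono)
  finally show ?thesis .
qed

lemma emeasure_mu_compl_M: "emeasure \<mu> (- M) = 0"
  using invariant[of "- M"] by (simp add: emeasure_K_compl_M)

lemma M_nonempty: "M \<noteq> {}"
proof
  assume "M = {}"
  then show False
    using emeasure_mu_compl_M prob_space.emeasure_space_1[OF prob_space_mu]
      sets_eq_imp_space_eq[OF sets_mu] by simp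
qed

lemma AE_X_in_M: "AE \<omega> in P. X i \<omega> \<in> M"
proof -
  have "emeasure P {\<omega>\<in>space P. X i \<omega> \<in> - M} = 0"
  proof (cases i)
    case 0
    have "emeasure P {\<omega>\<in>space P. X 0 \<omega> \<in> - M} = emeasure (distr P borel (X 0)) (- M)"
      by (subst emeasure_distr) (auto simp: vimage_def Int_def conj_commute)
    then show ?thesis
      using 0 init emeasure_mu_compl_M by simp
  next
    case (Suc j)
    have "space P \<in> gen_events P X j"
      unfolding gen_events_def by (rule sigma_sets_top)
    from markov[OF _ this, of "- M"] show ?thesis
      using Suc emeasure_K_compl_M by (simp add: Int_absorb1)
  qed
  then show ?thesis
    by (intro AE_I'[of "{\<omega>\<in>space P. X i \<omega> \<in> - M}"]) (auto simp: null_sets_def)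
qed

lemma kappa_emeasure_le_K:
  assumes "x \<in> M" "C \<in> sets borel"
  shows "\<kappa> * emeasure \<nu> (C \<inter> M) \<le> emeasure (K x) C"
proof -
  have "\<kappa> * emeasure \<nu> (C \<inter> M) = (\<integral>\<^sup>+ y. ennreal \<kappa> * indicator (C \<inter> M) y \<partial>\<nu>)"
    using assms sets_nu by (intro nn_integral_cmult_indicator[symmetric]) auto
  also have "\<dots> \<le> (\<integral>\<^sup>+ y. ennreal (k x y) * indicator C y \<partial>\<nu>)"
    using assms(1) by (intro nn_integral_mono) (auto simp: indicator_def kappa_le_k intro!: ennreal_leI)
  also have "\<dots> = emeasure (K x) C"
    using emeasure_K[OF assms(2)] by simp
  finally show ?thesis .
qed

lemma finite_measure_nu: "finite_measure \<nu>"
proof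
  obtain x where x: "x \<in> M"
    using M_nonempty by blast
  interpret Kx: prob_space "K x"
    by (rule prob_space_kernel[OF x])
  have "\<kappa> * emeasure \<nu> M \<le> 1"
    using kappa_emeasure_le_K[OF x, of UNIV] Kx.emeasure_space_1 by simp
  then have "emeasure \<nu> M \<noteq> \<infinity>"
    using kappa_pos by (auto simp: ennreal_mult_top top_unique)
  moreover have "emeasure \<nu> (M \<union> - M) = emeasure \<nu> M"
    using nu_compl_M sets_nu by (intro emeasure_Un_null_set) (auto simp: null_sets_def)
  ultimately show "emeasure \<nu> (space \<nu>) \<noteq> \<infinity>"
    by simp
qed

interpretation nu: finite_measure \<nu>
  by (rule finite_measure_nu)

lemma kappa_measure_le_K:
  assumes "x \<in> M" "C \<in> sets borel"
  shows "\<kappa> * measure \<nu> (C \<inter> M) \<le> measure (K x) C"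
proof -
  interpret Kx: prob_space "K x"
    by (rule prob_space_kernel[OF assms(1)])
  have "ennreal (\<kappa> * measure \<nu> (C \<inter> M)) \<le> ennreal (measure (K x) C)"
    using kappa_emeasure_le_K[OF assms] kappa_pos
    by (simp add: ennreal_mult nu.emeasure_eq_measure Kx.emeasure_eq_measure)
  then show ?thesis
    by (subst (asm) ennreal_le_iff) auto
qed

lemma kappa_measure_le_1: "C \<in> sets borel \<Longrightarrow> \<kappa> * measure \<nu> (C \<inter> M) \<le> 1"
  using M_nonempty kappa_measure_le_K prob_space.prob_le_1[OF prob_space_kernel] by (meson ex_in_conv order_trans)

lemma emeasure_K_compl_le:
  assumes "x \<in> M" "C \<in> sets borel"
  shows "emeasure (K x) (- C) \<le> 1 - \<kappa> * measure \<nu> (C \<inter> M)"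
proof -
  interpret Kx: prob_space "K x"
    by (rule prob_space_kernel[OF assms(1)])
  have "measure (K x) (- C) = 1 - measure (K x) C"
    using Kx.prob_compl[of C] assms(2) by (simp add: Compl_eq_Diff_UNIV)
  then show ?thesis
    using kappa_measure_le_K[OF assms] by (simp add: Kx.emeasure_eq_measure ennreal_leI)
qed

lemma prob_avoiding_le:
  assumes [measurable]: "C \<in> sets borel"
  shows "prob {\<omega>\<in>space P. \<forall>i\<in>{1..n}. X i \<omega> \<notin> C} \<le> (1 - \<kappa> * measure \<nu> (C \<inter> M)) ^ n"
proof -
  define q where "q = \<kappa> * measure \<nu> (C \<inter> M)"
  define E where "E n = {\<omega>\<in>space P. \<forall>i\<in>{1..n}. X i \<omega> \<notin> C}" for n
  have E_sets [measurable]: "E n \<in> sets P" for n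
    unfolding E_def by measurable
  have q_le_1: "q \<le> 1"
    unfolding q_def by (rule kappa_measure_le_1[OF assms])
  have "emeasure P (E n) \<le> ennreal ((1 - q) ^ n)" for n
  proof (induction n)
    case 0
    have "E 0 = space P"
      unfolding E_def by auto
    then show ?case
      by (simp add: emeasure_space_1)
  next
    case (Suc n)
    have "E (Suc n) = E n \<inter> {\<omega>\<in>space P. X (Suc n) \<omega> \<in> - C}"
      unfolding E_def by (auto simp: atLeastAtMostSuc_conv)
    moreover have "E n \<in> gen_events P X n"
      unfolding E_def by (rule avoiding_event_in_gen_events[OF assms])
    ultimately have "emeasure P (E (Suc n)) = (\<integral>\<^sup>+ \<omega>. indicator (E n) \<omega> * emeasure (K (X n \<omega>)) (- C) \<partial>P)"
      using markov[of "- C" "E n" n] by simp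
    also have "\<dots> \<le> (\<integral>\<^sup>+ \<omega>. ennreal (1 - q) * indicator (E n) \<omega> \<partial>P)"
      using AE_X_in_M[of n]
      by (intro nn_integral_mono_AE) (auto elim!: eventually_mono simp: indicator_def q_def emeasure_K_compl_le)
    also have "\<dots> = ennreal (1 - q) * emeasure P (E n)"
      by (rule nn_integral_cmult_indicator) measurable
    also have "\<dots> \<le> ennreal (1 - q) * ennreal ((1 - q) ^ n)"
      by (intro mult_left_mono Suc.IH) auto
    also have "\<dots> = ennreal ((1 - q) ^ Suc n)"
      using q_le_1 by (simp add: ennreal_mult[symmetric])
    finally show ?case .
  qed
  then have "ennreal (prob (E n)) \<le> ennreal ((1 - q) ^ n)"
    by (simp add: emeasure_eq_measure)
  then show ?thesis
    using q_le_1 unfolding E_def q_def by (subst (asm) ennreal_le_iff) auto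
qed

lemma prob_hausdorff_dist_gt_le_cover:
  assumes "finite S"
    and cover: "\<And>x. x \<in> M \<Longrightarrow> \<exists>s\<in>S. dist x s \<le> r"
    and q: "\<And>s. s \<in> S \<Longrightarrow> q \<le> \<kappa> * measure \<nu> (cball s r \<inter> M)"
    and "n \<ge> 1"
  shows "prob {\<omega>\<in>space P. 2 * r < hausdorff_dist ((\<lambda>i. X i \<omega>) ` {1..n}) M}
    \<le> real (card S) * (1 - q) ^ n"
proof -
  define E where "E s = {\<omega>\<in>space P. \<forall>i\<in>{1..n}. X i \<omega> \<notin> cball s r}" for s
  have [measurable]: "cball s r \<in> sets borel" for s
    by simp
  have E_sets [measurable]: "E s \<in> sets P" for s
    unfolding E_def by measurable
  have "AE \<omega> in P. \<forall>i\<in>{1..n}. X i \<omega> \<in> M"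
    by (intro AE_finite_allI AE_X_in_M) auto
  then have "AE \<omega> in P. \<omega> \<in> {\<omega>\<in>space P. 2 * r < hausdorff_dist ((\<lambda>i. X i \<omega>) ` {1..n}) M}
      \<longrightarrow> \<omega> \<in> (\<Union>s\<in>S. E s)"
  proof (rule eventually_mono, intro impI)
    fix \<omega> assume "\<forall>i\<in>{1..n}. X i \<omega> \<in> M"
      and \<omega>: "\<omega> \<in> {\<omega>\<in>space P. 2 * r < hausdorff_dist ((\<lambda>i. X i \<omega>) ` {1..n}) M}"
    then obtain s where "s \<in> S" "\<forall>a\<in>(\<lambda>i. X i \<omega>) ` {1..n}. a \<notin> cball s r"
      using hausdorff_dist_gt_imp_avoids_ball[of "(\<lambda>i. X i \<omega>) ` {1..n}" M S r]
        compact_imp_bounded[OF compact_M] cover \<open>n \<ge> 1\<close> by auto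
    then show "\<omega> \<in> (\<Union>s\<in>S. E s)"
      using \<omega> unfolding E_def by auto
  qed
  then have "prob {\<omega>\<in>space P. 2 * r < hausdorff_dist ((\<lambda>i. X i \<omega>) ` {1..n}) M}
      \<le> prob (\<Union>s\<in>S. E s)"
    using \<open>finite S\<close> by (intro finite_measure_mono_AE) auto
  also have "\<dots> \<le> (\<Sum>s\<in>S. prob (E s))"
    using \<open>finite S\<close> by (intro finite_measure_subadditive_finite) auto
  also have "\<dots> \<le> (\<Sum>s\<in>S. (1 - q) ^ n)"
  proof (rule sum_mono)
    fix s assume "s \<in> S"
    have "prob (E s) \<le> (1 - \<kappa> * measure \<nu> (cball s r \<inter> M)) ^ n"
      unfolding E_def by (rule prob_avoiding_le) simp
    also have "\<dots> \<le> (1 - q) ^ n"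
      using q[OF \<open>s \<in> S\<close>] kappa_measure_le_1[of "cball s r"] by (intro power_mono) auto
    finally show "prob (E s) \<le> (1 - q) ^ n" .
  qed
  finally show ?thesis
    by simp
qed

lemma prob_hausdorff_dist_le_eq:
  assumes "1 \<le> n"
  shows "prob {\<omega> \<in> space P. hausdorff_dist ((\<lambda>i. X i \<omega>) ` {1..n}) M \<le> e}
    = 1 - prob {\<omega> \<in> space P. hausdorff_dist ((\<lambda>i. X i \<omega>) ` {1..n}) M > e}"
proof -
  have "{\<omega> \<in> space P. hausdorff_dist ((\<lambda>i. X i \<omega>) ` {1..n}) M > e}
      = space P - {\<omega> \<in> space P. hausdorff_dist ((\<lambda>i. X i \<omega>) ` {1..n}) M \<le> e}"
    by auto
  also have "prob \<dots> = 1 - prob {\<omega> \<in> space P. hausdorff_dist ((\<lambda>i. X i \<omega>) ` {1..n}) M \<le> e}"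
    using X_measurable compact_M M_nonempty assms by (intro prob_compl measurable_hausdorff_dist_le)
  finally show ?thesis
    by simp
qed

end

text \<open>The lower bound on the \<open>\<nu>\<close>-mass of small balls is the \<open>(V, b)\<close>-standardness
  condition of set estimation; it is what turns covering numbers into powers of \<open>\<epsilon>\<close>.\<close>

locale standard_minorized_markov_chain = minorized_markov_chain +
  fixes V b \<epsilon>0 :: real
  assumes V_pos: "0 < V"
    and measure_cball_ge: "\<And>x e. x \<in> M \<Longrightarrow> 0 < e \<Longrightarrow> e < \<epsilon>0 \<Longrightarrow> V * e powr b \<le> measure \<nu> (cball x e \<inter> M)"
begin

lemma kappa_volume_le_kappa_measure:
  assumes "s \<in> M" "0 < \<epsilon>" "\<epsilon> < \<epsilon>0"
  shows "\<kappa> * \<epsilon> powr b * V / 2 powr b \<le> \<kappa> * measure \<nu> (cball s (\<epsilon>/2) \<inter> M)"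
proof -
  have "\<kappa> * \<epsilon> powr b * V / 2 powr b = \<kappa> * (V * (\<epsilon>/2) powr b)"
    using \<open>0 < \<epsilon>\<close> by (simp add: powr_divide)
  also have "\<dots> \<le> \<kappa> * measure \<nu> (cball s (\<epsilon>/2) \<inter> M)"
    using measure_cball_ge[of s "\<epsilon>/2"] assms kappa_pos by (intro mult_left_mono) auto
  finally show ?thesis .
qed

lemma kappa_volume_le_1:
  assumes "0 < \<epsilon>" "\<epsilon> < \<epsilon>0"
  shows "\<kappa> * \<epsilon> powr b * V / 2 powr b \<le> 1"
proof -
  obtain x0 where "x0 \<in> M"
    using M_nonempty by blast
  then have "\<kappa> * \<epsilon> powr b * V / 2 powr b \<le> \<kappa> * measure \<nu> (cball x0 (\<epsilon>/2) \<inter> M)"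
    using assms by (rule kappa_volume_le_kappa_measure)
  also have "\<dots> \<le> 1"
    by (rule kappa_measure_le_1) simp
  finally show ?thesis .
qed

lemma exists_cover_card_le:
  assumes "0 < \<epsilon>" "\<epsilon> < \<epsilon>0"
  obtains S where "finite S" "S \<subseteq> M" "\<And>x. x \<in> M \<Longrightarrow> \<exists>s\<in>S. dist x s \<le> \<epsilon>/2"
    "real (card S) \<le> 4 powr b / (\<kappa> * \<epsilon> powr b * V)"
proof -
  have "V * (\<epsilon>/4) powr b \<le> measure \<nu> (cball x (\<epsilon>/2/2) \<inter> M)" if "x \<in> M" for x
    using measure_cball_ge[OF that, of "\<epsilon>/4"] assms by simp
  moreover have "0 < V * (\<epsilon>/4) powr b"
    using V_pos assms(1) by simp
  ultimately obtain S where S: "finite S" "S \<subseteq> M"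
      "real (card S) * (V * (\<epsilon>/4) powr b) \<le> measure \<nu> M"
      "\<And>x. x \<in> M \<Longrightarrow> \<exists>s\<in>S. dist x s \<le> \<epsilon>/2"
    using exists_finite_cover_of_measure_lower_bound[OF finite_measure_nu sets_nu M_borel] assms(1)
    by (metis less_imp_le half_gt_zero)
  have "real (card S) * (\<kappa> * \<epsilon> powr b * V) = 4 powr b * \<kappa> * (real (card S) * (V * (\<epsilon>/4) powr b))"
    using assms(1) by (simp add: powr_divide)
  also have "\<dots> \<le> 4 powr b * (\<kappa> * measure \<nu> M)"
    using S(3) kappa_pos by (simp add: mult_left_mono)
  also have "\<dots> \<le> 4 powr b"
    using kappa_measure_le_1[of UNIV] by simp
  finally have card: "real (card S) \<le> 4 powr b / (\<kappa> * \<epsilon> powr b * V)"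
    using V_pos assms(1) kappa_pos by (simp add: pos_le_divide_eq)
  show ?thesis
    by (rule that[OF S(1,2,4) card])
qed

lemma prob_hausdorff_dist_gt_le:
  assumes "0 < \<epsilon>" "\<epsilon> < \<epsilon>0" "1 \<le> n"
  shows "prob {\<omega> \<in> space P. hausdorff_dist ((\<lambda>i. X i \<omega>) ` {1..n}) M > \<epsilon>}
    \<le> 4 powr b * (1 - \<kappa> * \<epsilon> powr b * V / 2 powr b) ^ n / (\<kappa> * \<epsilon> powr b * V)"
proof -
  define q where "q = \<kappa> * \<epsilon> powr b * V / 2 powr b"
  obtain S where S: "finite S" "S \<subseteq> M" "\<And>x. x \<in> M \<Longrightarrow> \<exists>s\<in>S. dist x s \<le> \<epsilon>/2"
      "real (card S) \<le> 4 powr b / (\<kappa> * \<epsilon> powr b * V)"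
    using exists_cover_card_le[OF assms(1,2)] by blast
  have q_le: "q \<le> \<kappa> * measure \<nu> (cball s (\<epsilon>/2) \<inter> M)" if "s \<in> S" for s
    unfolding q_def using that S(2) assms(1,2) by (intro kappa_volume_le_kappa_measure) auto
  have "q \<le> 1"
    unfolding q_def using assms(1,2) by (rule kappa_volume_le_1)
  have "prob {\<omega> \<in> space P. hausdorff_dist ((\<lambda>i. X i \<omega>) ` {1..n}) M > \<epsilon>} \<le> real (card S) * (1 - q) ^ n"
    using prob_hausdorff_dist_gt_le_cover[OF S(1,3) q_le \<open>1 \<le> n\<close>] by simp
  also have "\<dots> \<le> 4 powr b / (\<kappa> * \<epsilon> powr b * V) * (1 - q) ^ n"
    using S(4) \<open>q \<le> 1\<close> by (intro mult_right_mono) auto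
  finally show ?thesis
    unfolding q_def by simp
qed

lemma prob_hausdorff_dist_le_ge:
  assumes "0 < \<epsilon>" "\<epsilon> < \<epsilon>0" "0 < \<alpha>" "\<alpha> < 1"
    and n: "real n \<ge> 2 powr b / (\<kappa> * \<epsilon> powr b * V)
      * (ln (4 powr b / (\<kappa> * \<epsilon> powr b * V)) + ln (1 / \<alpha>))"
  shows "prob {\<omega> \<in> space P. hausdorff_dist ((\<lambda>i. X i \<omega>) ` {1..n}) M \<le> \<epsilon>} \<ge> 1 - \<alpha>"
proof -
  define q where "q = \<kappa> * \<epsilon> powr b * V / 2 powr b"
  define N where "N = 4 powr b / (\<kappa> * \<epsilon> powr b * V)"
  have "0 < q"
    unfolding q_def using V_pos assms(1) kappa_pos by simp
  have "q \<le> 1"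
    unfolding q_def using assms(1,2) by (rule kappa_volume_le_1)
  obtain S where S: "finite S" "S \<subseteq> M" "\<And>x. x \<in> M \<Longrightarrow> \<exists>s\<in>S. dist x s \<le> \<epsilon>/2"
      "real (card S) \<le> N"
    unfolding N_def using exists_cover_card_le[OF assms(1,2)] by blast
  have "S \<noteq> {}"
    using S(3) M_nonempty by blast
  then have "1 \<le> N"
    using S(1,4) by (simp add: Suc_leI card_gt_0_iff order_trans[rotated])
  have threshold: "1 / q * (ln N + ln (1 / \<alpha>)) \<le> real n"
    using n unfolding q_def N_def by simp
  moreover have "0 < 1 / q * (ln N + ln (1 / \<alpha>))"
    using \<open>0 < q\<close> \<open>1 \<le> N\<close> assms(3,4) by (intro mult_pos_pos add_nonneg_pos) auto
  ultimately have "1 \<le> n"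
    by linarith
  have "prob {\<omega> \<in> space P. hausdorff_dist ((\<lambda>i. X i \<omega>) ` {1..n}) M > \<epsilon>} \<le> N * (1 - q) ^ n"
    using prob_hausdorff_dist_gt_le[OF assms(1,2) \<open>1 \<le> n\<close>] unfolding q_def N_def by simp
  also have "\<dots> \<le> \<alpha>"
    using \<open>0 < q\<close> \<open>q \<le> 1\<close> \<open>1 \<le> N\<close> assms(3) threshold by (intro mult_one_minus_power_le) auto
  finally show ?thesis
    using prob_hausdorff_dist_le_eq[OF \<open>1 \<le> n\<close>] by simp
qed

end

theorem proposition5p1:
  fixes P :: "'w measure"
    and X :: "nat \<Rightarrow> 'w \<Rightarrow> 'a::euclidean_space"
    and \<mu> \<nu> :: "'a measure"
    and k :: "'a \<Rightarrow> 'a \<Rightarrow> real"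
    and b \<epsilon>0 \<kappa> :: real
    and \<MM> :: "'a set"
  defines "\<MM> \<equiv> measure_support \<mu>"
  defines "V \<equiv> (INF x\<in>\<MM>. INF e\<in>{0<..<\<epsilon>0}. measure \<nu> (cball x e \<inter> \<MM>) / e powr b)"
  assumes P: "prob_space P"
    and X_meas: "\<And>i. X i \<in> borel_measurable P"
    \<comment> \<open>(A1): invariant probability measure with compact support\<close>
    and mu_prob: "prob_space \<mu>" and mu_sets: "sets \<mu> = sets borel"
    and M_compact: "compact \<MM>"
    and invariant: "\<And>A. A \<in> sets borel \<Longrightarrow>
          emeasure \<mu> A = (\<integral>\<^sup>+ x. emeasure (density \<nu> (k x)) A \<partial>\<mu>)"
    \<comment> \<open>(A2): kernel K(x,dy) = k(x,y) nu(dy), nu a positive measure on M\<close>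
    and nu_sets: "sets \<nu> = sets borel"
    and nu_on_M: "emeasure \<nu> (- \<MM>) = 0"
    and k_meas: "(\<lambda>(x, y). k x y) \<in> borel_measurable (borel \<Otimes>\<^sub>M borel)"
    and k_pos: "\<And>x y. x \<in> \<MM> \<Longrightarrow> y \<in> \<MM> \<Longrightarrow> k x y > 0"
    and K_prob: "\<And>x. x \<in> \<MM> \<Longrightarrow> prob_space (density \<nu> (k x))"
    and b_pos: "b > 0" and eps0_pos: "\<epsilon>0 > 0"
    and V_pos: "V > 0"
    and kappa_pos: "\<kappa> > 0"
    and k_lower: "\<And>x y. x \<in> \<MM> \<Longrightarrow> y \<in> \<MM> \<Longrightarrow> k x y \<ge> \<kappa>"
    \<comment> \<open>homogeneous Markov chain with kernel K, started from mu\<close>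
    and init: "distr P borel (X 0) = \<mu>"
    and markov: "\<And>n A G. A \<in> sets borel \<Longrightarrow> G \<in> gen_events P X n \<Longrightarrow>
          emeasure P (G \<inter> {\<omega> \<in> space P. X (Suc n) \<omega> \<in> A})
            = (\<integral>\<^sup>+ \<omega>. indicator G \<omega> * emeasure (density \<nu> (k (X n \<omega>))) A \<partial>P)"
  shows "\<exists>\<epsilon>1>0. \<forall>\<epsilon>. 0 < \<epsilon> \<and> \<epsilon> < \<epsilon>1 \<longrightarrow>
           (\<forall>n\<ge>1. measure P {\<omega> \<in> space P. hausdorff_dist ((\<lambda>i. X i \<omega>) ` {1..n}) \<MM> > \<epsilon>}
               \<le> 4 powr b * (1 - \<kappa> * \<epsilon> powr b * V / 2 powr b) ^ n / (\<kappa> * \<epsilon> powr b * V))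
         \<and> (\<forall>\<alpha>. 0 < \<alpha> \<and> \<alpha> < 1 \<longrightarrow>
              (\<forall>n::nat. real n \<ge> 2 powr b / (\<kappa> * \<epsilon> powr b * V)
                  * (ln (4 powr b / (\<kappa> * \<epsilon> powr b * V)) + ln (1 / \<alpha>)) \<longrightarrow>
                measure P {\<omega> \<in> space P. hausdorff_dist ((\<lambda>i. X i \<omega>) ` {1..n}) \<MM> \<le> \<epsilon>}
                  \<ge> 1 - \<alpha>))"
proof -
  have chain: "minorized_markov_chain P X \<mu> \<nu> k \<kappa> \<MM>"
  proof (rule minorized_markov_chain.intro[OF P minorized_markov_chain_axioms.intro])
    show "k x \<in> borel_measurable borel" for x
      using measurable_Pair2[OF k_meas, of x] by simp
  qed (fact X_meas mu_prob mu_sets M_compact invariant nu_sets nu_on_M K_prob kappa_pos k_lower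
      init markov)+
  have "V * e powr b \<le> measure \<nu> (cball x e \<inter> \<MM>)" if "x \<in> \<MM>" "0 < e" "e < \<epsilon>0" for x e
    using INF_INF_le_nonneg[of "\<lambda>x e. measure \<nu> (cball x e \<inter> \<MM>) / e powr b" x \<MM> e "{0<..<\<epsilon>0}"]
      that unfolding V_def by (simp add: pos_le_divide_eq)
  then interpret standard_minorized_markov_chain P X \<mu> \<nu> k \<kappa> \<MM> V b \<epsilon>0
    using chain V_pos by (intro standard_minorized_markov_chain.intro standard_minorized_markov_chain_axioms.intro)
  show ?thesis
    using eps0_pos prob_hausdorff_dist_gt_le prob_hausdorff_dist_le_ge by (intro exI[of _ \<epsilon>0]) auto
qed

end
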